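(* Let the Hamiltonians satisfy (H) and $F$ satisfy (F). Fix $n\ge0$, let $(U_i^{\alpha,n})_{\alpha,i}$ be given (with $U_0^{\alpha,n}=U_0^n$ for all $\alpha$) and compute $(U_i^{\alpha,n+1})_{\alpha,i}$ by the scheme (S). If there is $K\in\mathbb R$ with $K\le W_i^{\alpha,n}$ for all $i\ge0$ and $\alpha=1,\dots,N$, then $$\pi_\alpha^-(-K)\le p_{i,+}^{\alpha,n}\le\pi_\alpha^+(-K)\quad(i\ge1,\ \alpha=1,\dots,N),\qquad \underline p_\alpha(-K)\le p_{0,+}^{\alpha,n}\le\pi_\alpha^+(-K)\quad(\alpha=1,\dots,N).$$
   Context: Hamiltonians (H): $H_\alpha:\mathbb R\to\mathbb R$, $\alpha=1,\dots,N$, are Lipschitz continuous, coercive and quasi-convex (sublevel sets convex). There is $p_0^\alpha$ with $H_\alpha$ non-increasing on $(-\infty,p_0^\alpha]$ and non-decreasing on $[p_0^\alpha,\infty)$; $H_\alpha^-(p)=H_\alpha(\min(p,p_0^\alpha))$, $H_\alpha^+(p)=H_\alpha(\max(p,p_0^\alpha))$; $A_\alpha=\min_{\mathbb R}H_\alpha$. Junction function (F): $F:\mathbb R^N\to\mathbb R$ is piecewise $C^1$, strictly decreasing in each variable $p_\alpha$, and $F(p)\to+\infty$ as $(p_1)_-+\dots+(p_N)_-\to+\infty$ ($r_-=\max(-r,0)$). Generalized inverses: $\pi_\alpha^+(a)=\sup\{p:H_\alpha^+(p)=\max(a,A_\alpha)\}$, $\pi_\alpha^-(a)=\inf\{p:H_\alpha^-(p)=\max(a,A_\alpha)\}$.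 For every $K$ there is $\underline p(K)\in\mathbb R^N$ such that $F(p)\le K$ implies $p_\alpha\ge\underline p_\alpha(K)$ for all $\alpha$; such a choice is fixed. Scheme (S) (one time step): $p_{i,+}^{\alpha,n}=(U_{i+1}^{\alpha,n}-U_i^{\alpha,n})/\Delta x$, $p_{i,-}^{\alpha,n}=(U_i^{\alpha,n}-U_{i-1}^{\alpha,n})/\Delta x$; $\frac{U_i^{\alpha,n+1}-U_i^{\alpha,n}}{\Delta t}+\max\{H_\alpha^+(p_{i,-}^{\alpha,n}),H_\alpha^-(p_{i,+}^{\alpha,n})\}=0$ for $i\ge1$; $\frac{U_0^{n+1}-U_0^n}{\Delta t}+F(p_{0,+}^{1,n},\dots,p_{0,+}^{N,n})=0$. $W_i^{\alpha,n}=(U_i^{\alpha,n+1}-U_i^{\alpha,n})/\Delta t$. *)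

theory Defs
  imports "HOL-Analysis.Analysis"
begin

definition Hminus :: "(real \<Rightarrow> real) \<Rightarrow> real \<Rightarrow> real \<Rightarrow> real" where
  "Hminus H p0 p = H (min p p0)"

definition Hplus :: "(real \<Rightarrow> real) \<Rightarrow> real \<Rightarrow> real \<Rightarrow> real" where
  "Hplus H p0 p = H (max p p0)"

definition Amin :: "(real \<Rightarrow> real) \<Rightarrow> real" where
  "Amin H = Inf (range H)"

definition pi_plus :: "(real \<Rightarrow> real) \<Rightarrow> real \<Rightarrow> real \<Rightarrow> real" where
  "pi_plus H p0 a = Sup {p. Hplus H p0 p = max a (Amin H)}"

definition pi_minus :: "(real \<Rightarrow> real) \<Rightarrow> real \<Rightarrow> real \<Rightarrow> real" where
  "pi_minus H p0 a = Inf {p. Hminus H p0 p = max a (Amin H)}"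

definition hyp_H :: "(real \<Rightarrow> real) \<Rightarrow> real \<Rightarrow> bool" where
  "hyp_H H p0 \<longleftrightarrow>
     (\<exists>L. \<forall>x y. \<bar>H x - H y\<bar> \<le> L * \<bar>x - y\<bar>) \<and>
     filterlim H at_top at_infinity \<and>
     (\<forall>a. convex {p. H p \<le> a}) \<and>
     (\<forall>x y. x \<le> y \<longrightarrow> y \<le> p0 \<longrightarrow> H y \<le> H x) \<and>
     (\<forall>x y. p0 \<le> x \<longrightarrow> x \<le> y \<longrightarrow> H x \<le> H y)"

definition C1_fun :: "(real^'n \<Rightarrow> real) \<Rightarrow> bool" where
  "C1_fun f \<longleftrightarrow> (\<exists>f' :: (real^'n) \<Rightarrow> ((real^'n) \<Rightarrow>\<^sub>L real).
     (\<forall>x. (f has_derivative blinfun_apply (f' x)) (at x)) \<and> continuous_on UNIV f')"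

definition piecewise_C1 :: "(real^'n \<Rightarrow> real) \<Rightarrow> bool" where
  "piecewise_C1 F \<longleftrightarrow> continuous_on UNIV F \<and>
     (\<exists>(Fs :: nat \<Rightarrow> real^'n \<Rightarrow> real) m. (\<forall>j<m. C1_fun (Fs j)) \<and>
        (\<forall>p. \<exists>j<m. F p = Fs j p))"

definition hyp_F :: "(real^'n \<Rightarrow> real) \<Rightarrow> bool" where
  "hyp_F F \<longleftrightarrow> piecewise_C1 F \<and>
     (\<forall>p \<alpha> s t. s < t \<longrightarrow>
        F (\<chi> \<beta>. if \<beta> = \<alpha> then t else p $ \<beta>) < F (\<chi> \<beta>. if \<beta> = \<alpha> then s else p $ \<beta>)) \<and>
     (\<forall>M. \<exists>R. \<forall>p. (\<Sum>\<alpha>\<in>UNIV. max (- (p $ \<alpha>)) 0) \<ge> R \<longrightarrow> F p \<ge> M)"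

text \<open>U \<alpha> i is the value on branch \<alpha> at grid point i (one fixed time level).\<close>
definition pplus :: "real \<Rightarrow> ('n \<Rightarrow> nat \<Rightarrow> real) \<Rightarrow> 'n \<Rightarrow> nat \<Rightarrow> real" where
  "pplus dx U \<alpha> i = (U \<alpha> (Suc i) - U \<alpha> i) / dx"

definition pminus :: "real \<Rightarrow> ('n \<Rightarrow> nat \<Rightarrow> real) \<Rightarrow> 'n \<Rightarrow> nat \<Rightarrow> real" where
  "pminus dx U \<alpha> i = (U \<alpha> i - U \<alpha> (i - 1)) / dx"

definition scheme_step ::
  "('n \<Rightarrow> real \<Rightarrow> real) \<Rightarrow> ('n \<Rightarrow> real) \<Rightarrow> (real^'n \<Rightarrow> real) \<Rightarrow> real \<Rightarrow> real
   \<Rightarrow> ('n \<Rightarrow> nat \<Rightarrow> real) \<Rightarrow> 'n \<Rightarrow> nat \<Rightarrow> real" where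
  "scheme_step H p0 F dt dx U \<alpha> i =
     (if i = 0 then U \<alpha> 0 - dt * F (\<chi> \<beta>. pplus dx U \<beta> 0)
      else U \<alpha> i - dt * max (Hplus (H \<alpha>) (p0 \<alpha>) (pminus dx U \<alpha> i))
                                 (Hminus (H \<alpha>) (p0 \<alpha>) (pplus dx U \<alpha> i)))"

end

theory Submission
  imports Defs
begin

text \<open>For \<open>i \<ge> 1\<close> the time difference of the scheme is \<open>-max (H\<^sup>+ p_{i,-}) (H\<^sup>- p_{i,+})\<close>,
  so \<open>W \<ge> K\<close> bounds both Hamiltonian values by \<open>-K\<close>; since \<open>p_{i,+} = p_{i+1,-}\<close> this gives
  \<open>H\<^sup>+ p_{i,+} \<le> -K\<close> for all \<open>i \<ge> 0\<close>. A continuous function that is \<open>\<le> c\<close> at \<open>p\<close> and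
  tends to \<open>+\<infinity>\<close> at \<open>+\<infinity>\<close> attains \<open>c\<close> to the right of \<open>p\<close>, so \<open>p\<close> lies below the supremum
  of the level set \<open>{H\<^sup>+ = max (-K) A}\<close>, which is \<open>\<pi>\<^sup>+(-K)\<close>; symmetrically for \<open>H\<^sup>-\<close> and \<open>\<pi>\<^sup>-\<close>.
  At the junction the scheme gives \<open>F p_{0,+} \<le> -K\<close>, exactly the premise defining \<open>p(-K)\<close>.\<close>

lemma Sup_level_set_ge:
  fixes f :: "real \<Rightarrow> real"
  assumes cont: "continuous_on UNIV f" and le: "f x \<le> c" and lim: "filterlim f at_top at_top"
  shows "x \<le> Sup {y. f y = c}"
proof -
  obtain b where b: "\<And>y. b \<le> y \<Longrightarrow> c < f y"
    using lim by (auto simp: filterlim_at_top_dense eventually_at_top_linorder)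
  obtain q where q: "x \<le> q" "f q = c"
    using IVT'[of f x c "max x b"] le b[of "max x b"] continuous_on_subset[OF cont] by force
  have "bdd_above {y. f y = c}"
    using b by (intro bdd_aboveI[of _ b]) (metis mem_Collect_eq nle_le order_less_irrefl)
  then have "q \<le> Sup {y. f y = c}"
    using q by (intro cSup_upper) auto
  with q show ?thesis by simp
qed

lemma Inf_level_set_le:
  fixes f :: "real \<Rightarrow> real"
  assumes cont: "continuous_on UNIV f" and le: "f x \<le> c" and lim: "filterlim f at_top at_bot"
  shows "Inf {y. f y = c} \<le> x"
proof -
  have "-x \<le> Sup {y. f (-y) = c}"
    using lim le by (intro Sup_level_set_ge continuous_on_compose2[OF cont])
      (auto intro: continuous_intros simp: filterlim_at_bot_mirror)
  moreover have "{y. f (-y) = c} = uminus ` {y. f y = c}"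
    by (force intro: image_eqI[of _ uminus "- _"])
  ultimately show ?thesis
    by (simp add: Inf_real_def)
qed

lemma lipschitz_bound_continuous_on:
  fixes f :: "real \<Rightarrow> real"
  assumes "\<forall>x y. \<bar>f x - f y\<bar> \<le> L * \<bar>x - y\<bar>"
  shows "continuous_on UNIV f"
proof (rule lipschitz_on_continuous_on[of "max L 0"], rule lipschitz_onI)
  fix x y :: real
  have "\<bar>f x - f y\<bar> \<le> L * \<bar>x - y\<bar>" using assms by blast
  also have "\<dots> \<le> max L 0 * \<bar>x - y\<bar>" by (simp add: mult_right_mono)
  finally show "dist (f x) (f y) \<le> max L 0 * dist x y" by (simp add: dist_real_def)
qed simp

lemma hyp_H_continuous_on: "hyp_H H p0 \<Longrightarrow> continuous_on UNIV H"
  unfolding hyp_H_def using lipschitz_bound_continuous_on by blast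

lemma filterlim_Hplus_at_top:
  assumes "hyp_H H p0"
  shows "filterlim (Hplus H p0) at_top at_top"
proof -
  have "filterlim H at_top at_top"
    using assms filterlim_mono[OF _ order_refl at_top_le_at_infinity] by (auto simp: hyp_H_def)
  moreover have "eventually (\<lambda>p. H p = Hplus H p0 p) at_top"
    using eventually_ge_at_top[of p0] by eventually_elim (simp add: Hplus_def)
  ultimately show ?thesis
    by (rule filterlim_mono_eventually[OF _ order_refl order_refl])
qed

lemma filterlim_Hminus_at_bot:
  assumes "hyp_H H p0"
  shows "filterlim (Hminus H p0) at_top at_bot"
proof -
  have "filterlim H at_top at_bot"
    using assms filterlim_mono[OF _ order_refl at_bot_le_at_infinity] by (auto simp: hyp_H_def)
  moreover have "eventually (\<lambda>p. H p = Hminus H p0 p) at_bot"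
    using eventually_le_at_bot[of p0] by eventually_elim (simp add: Hminus_def)
  ultimately show ?thesis
    by (rule filterlim_mono_eventually[OF _ order_refl order_refl])
qed

lemma continuous_on_Hplus: "hyp_H H p0 \<Longrightarrow> continuous_on UNIV (Hplus H p0)"
  unfolding Hplus_def
  by (rule continuous_on_compose2[OF hyp_H_continuous_on]) (auto intro: continuous_intros)

lemma continuous_on_Hminus: "hyp_H H p0 \<Longrightarrow> continuous_on UNIV (Hminus H p0)"
  unfolding Hminus_def
  by (rule continuous_on_compose2[OF hyp_H_continuous_on]) (auto intro: continuous_intros)

lemma le_pi_plus:
  assumes "hyp_H H p0" and "Hplus H p0 p \<le> a"
  shows "p \<le> pi_plus H p0 a"
  unfolding pi_plus_def
  by (rule Sup_level_set_ge[OF continuous_on_Hplus[OF assms(1)] _ filterlim_Hplus_at_top[OF assms(1)]])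
    (use assms(2) in linarith)

lemma pi_minus_le:
  assumes "hyp_H H p0" and "Hminus H p0 p \<le> a"
  shows "pi_minus H p0 a \<le> p"
  unfolding pi_minus_def
  by (rule Inf_level_set_le[OF continuous_on_Hminus[OF assms(1)] _ filterlim_Hminus_at_bot[OF assms(1)]])
    (use assms(2) in linarith)

lemma scheme_step_time_difference:
  assumes "dt \<noteq> 0"
  shows "(scheme_step H p0 F dt dx U \<alpha> i - U \<alpha> i) / dt =
    (if i = 0 then - F (\<chi> \<beta>. pplus dx U \<beta> 0)
     else - max (Hplus (H \<alpha>) (p0 \<alpha>) (pminus dx U \<alpha> i)) (Hminus (H \<alpha>) (p0 \<alpha>) (pplus dx U \<alpha> i)))"
  using assms by (simp add: scheme_step_def)

lemma pplus_eq_pminus_Suc: "pplus dx U \<alpha> i = pminus dx U \<alpha> (Suc i)"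
  by (simp add: pplus_def pminus_def)

theorem proposition3p3:
  fixes H :: "'n::finite \<Rightarrow> real \<Rightarrow> real"
    and p0 :: "'n \<Rightarrow> real"
    and F :: "real^'n \<Rightarrow> real"
    and plow :: "real \<Rightarrow> real^'n"
    and U :: "'n \<Rightarrow> nat \<Rightarrow> real"
    and dt dx K :: real
  assumes HH: "\<forall>\<alpha>. hyp_H (H \<alpha>) (p0 \<alpha>)"
    and HF: "hyp_F F"
    and plow: "\<forall>K' p. F p \<le> K' \<longrightarrow> (\<forall>\<alpha>. plow K' $ \<alpha> \<le> p $ \<alpha>)"
    and dt: "dt > 0" and dx: "dx > 0"
    and junction: "\<forall>\<alpha> \<beta>. U \<alpha> 0 = U \<beta> 0"
    and W: "\<forall>\<alpha> i. K \<le> (scheme_step H p0 F dt dx U \<alpha> i - U \<alpha> i) / dt"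
  shows "(\<forall>\<alpha>. \<forall>i\<ge>1. pi_minus (H \<alpha>) (p0 \<alpha>) (-K) \<le> pplus dx U \<alpha> i \<and>
                       pplus dx U \<alpha> i \<le> pi_plus (H \<alpha>) (p0 \<alpha>) (-K)) \<and>
         (\<forall>\<alpha>. plow (-K) $ \<alpha> \<le> pplus dx U \<alpha> 0 \<and>
               pplus dx U \<alpha> 0 \<le> pi_plus (H \<alpha>) (p0 \<alpha>) (-K))"
proof -
  have W_branch: "Hplus (H \<alpha>) (p0 \<alpha>) (pminus dx U \<alpha> i) \<le> -K \<and>
      Hminus (H \<alpha>) (p0 \<alpha>) (pplus dx U \<alpha> i) \<le> -K" if "i \<ge> 1" for \<alpha> i
    using W[rule_format, of \<alpha> i] that dt by (simp add: scheme_step_time_difference max_def split: if_splits)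
  have W_junction: "F (\<chi> \<beta>. pplus dx U \<beta> 0) \<le> -K"
    using W[rule_format, of undefined 0] dt by (simp add: scheme_step_time_difference)
  have upper: "pplus dx U \<alpha> i \<le> pi_plus (H \<alpha>) (p0 \<alpha>) (-K)" for \<alpha> i
    using W_branch[of "Suc i" \<alpha>] HH le_pi_plus by (simp add: pplus_eq_pminus_Suc)
  have lower: "pi_minus (H \<alpha>) (p0 \<alpha>) (-K) \<le> pplus dx U \<alpha> i" if "i \<ge> 1" for \<alpha> i
    using W_branch[OF that] HH pi_minus_le by blast
  have junction_lower: "plow (-K) $ \<alpha> \<le> pplus dx U \<alpha> 0" for \<alpha>
    using plow W_junction by fastforce
  show ?thesis
    using upper lower junction_lower by blast
qed

end
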